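(* For any $\gamma>0$ and $\Delta>0$ there exists a performative prediction problem (a dimension $d$, a closed convex parameter set $\Theta\subseteq\mathbb{R}^d$, a distribution map $\mathcal{D}(\cdot)$ and a loss $\ell$) such that the loss is $\gamma$-strongly convex in $\theta$, there is a unique performatively stable point $\theta_{\mathrm{PS}}$, this point $\theta_{\mathrm{PS}}$ is a maximizer of the performative risk over $\Theta$, and $\mathrm{PR}(\theta_{\mathrm{PS}})-\min_{\theta\in\Theta}\mathrm{PR}(\theta)\geq \Delta$.
   Context: A performative prediction problem consists of a closed convex set $\Theta\subseteq\mathbb{R}^d$ of model parameters, a distribution map $\mathcal{D}(\cdot)$ assigning to each $\theta\in\Theta$ a probability distribution $\mathcal{D}(\theta)$ over $\mathbb{R}^m$, and a loss function $\ell(z;\theta)$. The performative risk is $\mathrm{PR}(\theta)=\mathbb{E}_{z\sim\mathcal{D}(\theta)}\ell(z;\theta)$. A point $\theta_{\mathrm{PS}}\in\Theta$ is performatively stable if $\theta_{\mathrm{PS}}\in\arg\min_{\theta\in\Theta}\mathbb{E}_{z\sim\mathcal{D}(\theta_{\mathrm{PS}})}\ell(z;\theta)$. The loss is $\gamma$-strongly convex in $\theta$ if for all $\theta,\theta',\theta_0\in\Theta$: $\mathbb{E}_{z\sim\mathcal{D}(\theta_0)}\ell(z;\theta)\geq \mathbb{E}_{z\sim\mathcal{D}(\theta_0)}\ell(z;\theta')+\mathbb{E}_{z\sim\mathcal{D}(\theta_0)}\nabla_\theta\ell(z;\theta')^\top(\theta-\theta')+\frac{\gamma}{2}\|\theta-\theta'\|_2^2$.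 *)

theory Defs
  imports "HOL-Probability.Probability"
begin

text \<open>Performative prediction, instantiated with parameter space and data space the reals
  (d = m = 1). Theta :: real set, D :: real \<Rightarrow> real measure, loss l z theta.\<close>

definition pp_problem :: "real set \<Rightarrow> (real \<Rightarrow> real measure) \<Rightarrow> bool" where
  "pp_problem \<Theta> D \<longleftrightarrow> closed \<Theta> \<and> convex \<Theta> \<and>
     (\<forall>\<theta>\<in>\<Theta>. prob_space (D \<theta>) \<and> sets (D \<theta>) = sets borel)"

definition perf_risk :: "(real \<Rightarrow> real measure) \<Rightarrow> (real \<Rightarrow> real \<Rightarrow> real) \<Rightarrow> real \<Rightarrow> real" where
  "perf_risk D l \<theta> = (\<integral>z. l z \<theta> \<partial>D \<theta>)"

definition perf_stable :: "real set \<Rightarrow> (real \<Rightarrow> real measure) \<Rightarrow> (real \<Rightarrow> real \<Rightarrow> real) \<Rightarrow> real \<Rightarrow> bool" where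
  "perf_stable \<Theta> D l \<theta>ps \<longleftrightarrow> \<theta>ps \<in> \<Theta> \<and>
     (\<forall>\<theta>\<in>\<Theta>. (\<integral>z. l z \<theta>ps \<partial>D \<theta>ps) \<le> (\<integral>z. l z \<theta> \<partial>D \<theta>ps))"

definition strongly_convex_loss :: "real \<Rightarrow> real set \<Rightarrow> (real \<Rightarrow> real measure) \<Rightarrow> (real \<Rightarrow> real \<Rightarrow> real) \<Rightarrow> bool" where
  "strongly_convex_loss \<gamma> \<Theta> D l \<longleftrightarrow>
     (\<exists>g. (\<forall>z. \<forall>\<theta>\<in>\<Theta>. ((\<lambda>t. l z t) has_real_derivative g z \<theta>) (at \<theta>)) \<and>
       (\<forall>\<theta>0\<in>\<Theta>. \<forall>\<theta>\<in>\<Theta>. integrable (D \<theta>0) (\<lambda>z. l z \<theta>) \<and> integrable (D \<theta>0) (\<lambda>z. g z \<theta>)) \<and>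
       (\<forall>\<theta>\<in>\<Theta>. \<forall>\<theta>'\<in>\<Theta>. \<forall>\<theta>0\<in>\<Theta>.
          (\<integral>z. l z \<theta> \<partial>D \<theta>0) \<ge> (\<integral>z. l z \<theta>' \<partial>D \<theta>0) + (\<integral>z. g z \<theta>' \<partial>D \<theta>0) * (\<theta> - \<theta>')
              + \<gamma> / 2 * (\<theta> - \<theta>')\<^sup>2))"

end

theory Submission
  imports Defs
begin

text \<open>Take the loss \<open>\<gamma>/2 \<theta>\<^sup>2 + z \<theta>\<close> and let deploying \<open>\<theta>\<close> move all data to the single point
  \<open>z = -c \<gamma> \<theta>\<close> with \<open>1/2 < c < 1\<close>. Every expected loss is then a quadratic with leading coefficient
  \<open>\<gamma>/2\<close>, hence exactly \<open>\<gamma>\<close>-strongly convex. The best response to \<open>\<theta>\<close> is \<open>c \<theta>\<close>, so on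
  \<open>\<Theta> = [0, R]\<close> only \<open>\<theta> = 0\<close> is stable, whereas the performative risk \<open>(1/2 - c) \<gamma> \<theta>\<^sup>2\<close>
  decreases on \<open>\<Theta>\<close>: the stable point is the maximiser and the gap to the minimiser \<open>R\<close> is
  \<open>(c - 1/2) \<gamma> R\<^sup>2\<close>, which is made equal to \<open>\<Delta>\<close> by the choice of \<open>R\<close>.\<close>

lemma integrable_return:
  fixes g :: "_ \<Rightarrow> 'a :: {banach, second_countable_topology}"
  assumes "x \<in> space M" and "g \<in> borel_measurable M"
  shows "integrable (return M x) g"
proof -
  have "(\<integral>\<^sup>+ a. ennreal (norm (g a)) \<partial>return M x) = ennreal (norm (g x))"
    using assms by (intro nn_integral_return) auto
  then show ?thesis
    using assms by (simp add: integrable_iff_bounded)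
qed

lemma perf_risk_return:
  assumes "(\<lambda>z. l z \<theta>) \<in> borel_measurable borel"
  shows "perf_risk (\<lambda>\<theta>. return borel (f \<theta>)) l \<theta> = l (f \<theta>) \<theta>"
  unfolding perf_risk_def using assms by (simp add: integral_return)

lemma perf_stable_return_iff:
  assumes "\<And>\<theta>. (\<lambda>z. l z \<theta>) \<in> borel_measurable borel"
  shows "perf_stable \<Theta> (\<lambda>\<theta>. return borel (f \<theta>)) l \<theta> \<longleftrightarrow>
    \<theta> \<in> \<Theta> \<and> (\<forall>t\<in>\<Theta>. l (f \<theta>) \<theta> \<le> l (f \<theta>) t)"
  unfolding perf_stable_def using assms by (simp add: integral_return)

lemma pp_problem_return:
  "closed \<Theta> \<Longrightarrow> convex \<Theta> \<Longrightarrow> pp_problem \<Theta> (\<lambda>\<theta>. return borel (f \<theta>))"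
  unfolding pp_problem_def by (simp add: prob_space_return)

definition quadratic_loss :: "real \<Rightarrow> real \<Rightarrow> real \<Rightarrow> real" where
  "quadratic_loss \<gamma> z \<theta> = \<gamma> / 2 * \<theta>\<^sup>2 + z * \<theta>"

lemma quadratic_loss_measurable [measurable]:
  "(\<lambda>z. quadratic_loss \<gamma> z \<theta>) \<in> borel_measurable borel"
  unfolding quadratic_loss_def by measurable

lemma quadratic_loss_taylor:
  "quadratic_loss \<gamma> z \<theta> =
     quadratic_loss \<gamma> z \<theta>' + (\<gamma> * \<theta>' + z) * (\<theta> - \<theta>') + \<gamma> / 2 * (\<theta> - \<theta>')\<^sup>2"
  unfolding quadratic_loss_def by (simp add: power2_eq_square algebra_simps)

lemma strongly_convex_quadratic_loss_return:
  "strongly_convex_loss \<gamma> \<Theta> (\<lambda>\<theta>. return borel (f \<theta>)) (quadratic_loss \<gamma>)"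
  unfolding strongly_convex_loss_def
proof (intro exI[of _ "\<lambda>z \<theta>. \<gamma> * \<theta> + z"] conjI ballI allI)
  fix z \<theta> :: real
  show "((\<lambda>t. quadratic_loss \<gamma> z t) has_real_derivative \<gamma> * \<theta> + z) (at \<theta>)"
    unfolding quadratic_loss_def
    by (auto intro!: derivative_eq_intros simp: power2_eq_square algebra_simps)
next
  fix \<theta> \<theta>0 :: real
  show "integrable (return borel (f \<theta>0)) (\<lambda>z. quadratic_loss \<gamma> z \<theta>)"
    and "integrable (return borel (f \<theta>0)) (\<lambda>z. \<gamma> * \<theta> + z)"
    by (simp_all add: integrable_return)
next
  fix \<theta> \<theta>' \<theta>0 :: real
  show "(\<integral>z. quadratic_loss \<gamma> z \<theta> \<partial>return borel (f \<theta>0)) \<ge>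
      (\<integral>z. quadratic_loss \<gamma> z \<theta>' \<partial>return borel (f \<theta>0)) +
      (\<integral>z. \<gamma> * \<theta>' + z \<partial>return borel (f \<theta>0)) * (\<theta> - \<theta>') + \<gamma> / 2 * (\<theta> - \<theta>')\<^sup>2"
    by (simp add: integral_return quadratic_loss_taylor[of _ _ \<theta> \<theta>'])
qed

lemma perf_risk_linear_shift:
  "perf_risk (\<lambda>\<theta>. return borel (- c * \<gamma> * \<theta>)) (quadratic_loss \<gamma>) \<theta> = (1/2 - c) * \<gamma> * \<theta>\<^sup>2"
  by (simp add: perf_risk_return quadratic_loss_def power2_eq_square algebra_simps)

lemma perf_stable_linear_shift_iff:
  assumes "\<gamma> > 0" and "0 \<le> c" and "c < 1" and "R \<ge> 0"
  shows "perf_stable {0..R} (\<lambda>\<theta>. return borel (- c * \<gamma> * \<theta>)) (quadratic_loss \<gamma>) \<theta> \<longleftrightarrow> \<theta> = 0"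
proof -
  let ?l = "\<lambda>\<theta> t. quadratic_loss \<gamma> (- c * \<gamma> * \<theta>) t"
  have best_response_gain: "?l \<theta> \<theta> - ?l \<theta> (c * \<theta>) = \<gamma> / 2 * ((1 - c) * \<theta>)\<^sup>2" for \<theta>
    by (simp add: quadratic_loss_def power2_eq_square algebra_simps)
  have not_stable: "\<not> ?l \<theta> \<theta> \<le> ?l \<theta> (c * \<theta>)" if "\<theta> \<noteq> 0" for \<theta>
  proof -
    have "\<gamma> / 2 * ((1 - c) * \<theta>)\<^sup>2 > 0"
      using that assms by simp
    then show ?thesis
      using best_response_gain[of \<theta>] by linarith
  qed
  have best_response_feasible: "c * \<theta> \<in> {0..R}" if "\<theta> \<in> {0..R}" for \<theta>
    using that assms by (auto intro: order.trans[OF mult_left_le_one_le])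
  show ?thesis
  proof
    assume "perf_stable {0..R} (\<lambda>\<theta>. return borel (- c * \<gamma> * \<theta>)) (quadratic_loss \<gamma>) \<theta>"
    then have "\<theta> \<in> {0..R}" and "\<forall>t\<in>{0..R}. ?l \<theta> \<theta> \<le> ?l \<theta> t"
      by (simp_all add: perf_stable_return_iff)
    then show "\<theta> = 0"
      using not_stable best_response_feasible by blast
  next
    assume "\<theta> = 0"
    then show "perf_stable {0..R} (\<lambda>\<theta>. return borel (- c * \<gamma> * \<theta>)) (quadratic_loss \<gamma>) \<theta>"
      using assms by (simp add: perf_stable_return_iff quadratic_loss_def)
  qed
qed

theorem proposition2p1:
  fixes \<gamma> \<Delta> :: real
  assumes "\<gamma> > 0" and "\<Delta> > 0"
  shows "\<exists>(\<Theta>::real set) (D::real \<Rightarrow> real measure) (l::real \<Rightarrow> real \<Rightarrow> real).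
     pp_problem \<Theta> D \<and> strongly_convex_loss \<gamma> \<Theta> D l \<and>
     (\<exists>!\<theta>ps. perf_stable \<Theta> D l \<theta>ps) \<and>
     (\<forall>\<theta>ps. perf_stable \<Theta> D l \<theta>ps \<longrightarrow>
        (\<forall>\<theta>\<in>\<Theta>. perf_risk D l \<theta> \<le> perf_risk D l \<theta>ps) \<and>
        (\<exists>\<theta>m\<in>\<Theta>. (\<forall>\<theta>\<in>\<Theta>. perf_risk D l \<theta>m \<le> perf_risk D l \<theta>) \<and>
           perf_risk D l \<theta>ps - perf_risk D l \<theta>m \<ge> \<Delta>))"
proof -
  define R where "R = 2 * sqrt (\<Delta> / \<gamma>)"
  define D where "D = (\<lambda>\<theta>. return borel (- (3/4) * \<gamma> * \<theta>))"
  have "R \<ge> 0" and R_sq: "R\<^sup>2 = 4 * \<Delta> / \<gamma>"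
    using assms by (simp_all add: R_def power_mult_distrib)
  have stable: "perf_stable {0..R} D (quadratic_loss \<gamma>) \<theta> \<longleftrightarrow> \<theta> = 0" for \<theta>
    unfolding D_def using assms \<open>R \<ge> 0\<close> by (intro perf_stable_linear_shift_iff) auto
  have risk: "perf_risk D (quadratic_loss \<gamma>) \<theta> = - \<gamma> / 4 * \<theta>\<^sup>2" for \<theta>
    unfolding D_def perf_risk_linear_shift by simp
  have max_at_0: "perf_risk D (quadratic_loss \<gamma>) \<theta> \<le> perf_risk D (quadratic_loss \<gamma>) 0" for \<theta>
    using assms unfolding risk by simp
  have min_at_R: "perf_risk D (quadratic_loss \<gamma>) R \<le> perf_risk D (quadratic_loss \<gamma>) \<theta>"
    if "\<theta> \<in> {0..R}" for \<theta>
    using that assms unfolding risk by (auto intro: power_mono)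
  have gap: "perf_risk D (quadratic_loss \<gamma>) 0 - perf_risk D (quadratic_loss \<gamma>) R = \<Delta>"
    using assms unfolding risk R_sq by simp
  show ?thesis
  proof (intro exI[of _ "{0..R}"] exI[of _ D] exI[of _ "quadratic_loss \<gamma>"] conjI allI impI)
    show "pp_problem {0..R} D" and "strongly_convex_loss \<gamma> {0..R} D (quadratic_loss \<gamma>)"
      unfolding D_def by (simp_all add: pp_problem_return strongly_convex_quadratic_loss_return)
    show "\<exists>!\<theta>ps. perf_stable {0..R} D (quadratic_loss \<gamma>) \<theta>ps"
      using stable by auto
    fix \<theta>ps assume "perf_stable {0..R} D (quadratic_loss \<gamma>) \<theta>ps"
    then have "\<theta>ps = 0"
      using stable by simp
    then show "\<forall>\<theta>\<in>{0..R}. perf_risk D (quadratic_loss \<gamma>) \<theta> \<le> perf_risk D (quadratic_loss \<gamma>) \<theta>ps"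
      using max_at_0 by simp
    show "\<exists>\<theta>m\<in>{0..R}. (\<forall>\<theta>\<in>{0..R}. perf_risk D (quadratic_loss \<gamma>) \<theta>m \<le> perf_risk D (quadratic_loss \<gamma>) \<theta>) \<and>
          perf_risk D (quadratic_loss \<gamma>) \<theta>ps - perf_risk D (quadratic_loss \<gamma>) \<theta>m \<ge> \<Delta>"
      using \<open>\<theta>ps = 0\<close> min_at_R gap \<open>R \<ge> 0\<close> by (intro bexI[of _ R]) auto
  qed
qed

end
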